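(* Let $G$ be a non-discrete compact group with normalized Haar measure $\nu$ ($\nu(G)=1$). For every neighborhood $U$ of the identity of $G$ there exists a $U$-fine equisize partition of $G$.
   Context: A finite partition $\mathcal P$ of a set $X\subseteq G$ into Haar-measurable sets is called $U$-fine if for every $P\in\mathcal P$ there is $g\in G$ with $P\subseteq gU$, and equisize if all sets in $\mathcal P$ have the same Haar measure. *)

theory Defs
  imports "HOL-Analysis.Analysis" "HOL-Library.Disjoint_Sets"
begin

(* A (group-)topological group is written additively via the class
   topological_group_add (group_add is NOT assumed commutative). *)
definition haar_measure :: "'a::{topological_group_add,t2_space} measure \<Rightarrow> bool" where
  "haar_measure \<nu> \<longleftrightarrow>
     sets \<nu> = sets borel \<and>
     (\<forall>g. \<forall>A\<in>sets borel. emeasure \<nu> ((\<lambda>x. g + x) ` A) = emeasure \<nu> A) \<and>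
     (\<forall>K. compact K \<longrightarrow> emeasure \<nu> K < \<infinity>) \<and>
     (\<forall>A\<in>sets borel. emeasure \<nu> A = (INF V\<in>{V. open V \<and> A \<subseteq> V}. emeasure \<nu> V)) \<and>
     (\<forall>V. open V \<longrightarrow> emeasure \<nu> V = (SUP K\<in>{K. compact K \<and> K \<subseteq> V}. emeasure \<nu> K))"

definition haar_measurable :: "'a measure \<Rightarrow> 'a set \<Rightarrow> bool" where
  "haar_measurable \<nu> A \<longleftrightarrow> A \<in> sets (completion \<nu>)"

definition U_fine :: "'a::plus set \<Rightarrow> 'a set set \<Rightarrow> bool" where
  "U_fine U \<P> \<longleftrightarrow> (\<forall>P\<in>\<P>. \<exists>g. P \<subseteq> (\<lambda>x. g + x) ` U)"

definition equisize :: "'a measure \<Rightarrow> 'a set set \<Rightarrow> bool" where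
  "equisize \<nu> \<P> \<longleftrightarrow> (\<forall>P\<in>\<P>. \<forall>Q\<in>\<P>. emeasure (completion \<nu>) P = emeasure (completion \<nu>) Q)"

end

(*
  Choose an open symmetric neighbourhood V of 0 whose 8-fold sumset lies in U. The sumsets
  V^n exhaust an open subgroup H, which has finitely many cosets because G is compact;
  so it suffices to cut H into pieces of one common measure, each inside a left translate
  of V^7, and to translate these pieces to every coset.

  A maximal family of disjoint translates f_i + V inside H gives disjoint cells
  f_i + V <= Q_i <= f_i + V^2 covering H. Call two cells adjacent if their centres differ
  by an element of V^5; since V generates H the adjacency graph is connected, so some walk
  visits every cell. Splitting each cell evenly among its visits yields a chain of pieces
  S_1, ..., S_L, each of measure at least mu(V)/L, any two consecutive ones lying in one
  translate of V^7. Singletons are null in a non-discrete compact group, so the Haar measure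
  takes all intermediate values on subsets; this lets us cut the chain greedily into parts
  of measure mu(H)/k for large k, each part inside the union of two consecutive pieces.
*)

theory Submission
  imports Defs
begin

section \<open>Translations and iterated sumsets\<close>

lemma translation_eq_vimage:
  fixes S :: "'a::group_add set"
  shows "(+) g ` S = (\<lambda>x. -g + x) -` S"
proof
  show "(\<lambda>x. -g + x) -` S \<subseteq> (+) g ` S"
  proof
    fix x assume "x \<in> (\<lambda>x. -g + x) -` S"
    moreover have "x = g + (-g + x)"
      by (simp add: add.assoc[symmetric])
    ultimately show "x \<in> (+) g ` S"
      by blast
  qed
qed (auto simp: add.assoc[symmetric])

lemma mem_translation_iff: "(z::'a::group_add) \<in> (+) g ` S \<longleftrightarrow> -g + z \<in> S"
  by (simp add: translation_eq_vimage)

lemma open_left_translation: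
  fixes S :: "'a::topological_group_add set"
  assumes "open S"
  shows "open ((+) g ` S)"
  unfolding translation_eq_vimage
  by (rule open_vimage[OF assms]) (intro continuous_intros)

lemma borel_left_translation:
  fixes S :: "'a::topological_group_add set"
  assumes "S \<in> sets borel"
  shows "(+) g ` S \<in> sets borel"
proof -
  have "(\<lambda>x::'a. -g + x) \<in> borel_measurable borel"
    by (intro borel_measurable_continuous_onI continuous_intros)
  from measurable_sets[OF this assms] show ?thesis
    by (simp add: translation_eq_vimage)
qed

lemma open_set_plus:
  fixes V :: "'a::topological_group_add set"
  assumes "open V"
  shows "open (X + V)"
proof -
  have "X + V = (\<Union>x\<in>X. (+) x ` V)"
    by (auto simp: set_plus_def)
  then show ?thesis
    using open_left_translation[OF assms] by auto
qed

lemma symmetric_nbhd_sum_subset: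
  fixes W :: "'a::topological_group_add set"
  assumes "open W" "0 \<in> W"
  shows "\<exists>V. open V \<and> 0 \<in> V \<and> (\<forall>x\<in>V. -x \<in> V) \<and> V + V \<subseteq> W"
proof -
  have "((\<lambda>p::'a \<times> 'a. fst p + snd p) \<longlongrightarrow> fst (0::'a, 0::'a) + snd (0::'a, 0::'a)) (nhds (0, 0))"
    by (intro tendsto_intros filterlim_ident)
  then have "eventually (\<lambda>p. fst p + snd p \<in> W) (nhds (0::'a, 0::'a))"
    using assms by (auto dest!: topological_tendstoD)
  then obtain P where P: "eventually P (nhds (0::'a))" "\<And>x y. P x \<Longrightarrow> P y \<Longrightarrow> x + y \<in> W"
    unfolding nhds_prod eventually_prod_same by auto
  then obtain S where S: "open S" "0 \<in> S" "\<forall>x\<in>S. P x"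
    unfolding eventually_nhds by auto
  define V where "V = S \<inter> uminus -` S"
  have "open V"
    unfolding V_def by (intro open_Int S open_vimage continuous_intros)
  moreover have "V + V \<subseteq> W"
    using S P by (auto simp: V_def elim!: set_plus_elim)
  ultimately show ?thesis
    using S by (intro exI[of _ V]) (auto simp: V_def)
qed

lemma set_plus_zero_left [simp]: "{0::'a::monoid_add} + A = A"
  using add_0[of A] by (simp only: set_zero)

lemma set_plus_zero_right [simp]: "A + {0::'a::monoid_add} = A"
  using add_0_right[of A] by (simp only: set_zero)

fun sumset_power :: "'a::monoid_add set \<Rightarrow> nat \<Rightarrow> 'a set" where
  "sumset_power V 0 = {0}"
| "sumset_power V (Suc n) = sumset_power V n + V"

lemma sumset_power_add: "sumset_power V (m + n) = sumset_power V m + sumset_power V n"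
  by (induction n) (simp_all add: add.assoc)

lemma sumset_power_add_mem:
  "x \<in> sumset_power V m \<Longrightarrow> y \<in> sumset_power V n \<Longrightarrow> x + y \<in> sumset_power V (m + n)"
  by (auto simp: sumset_power_add)

lemma sumset_power_1 [simp]: "sumset_power V 1 = V"
  by simp

lemma sumset_power_2 [simp]: "sumset_power V 2 = V + V"
  by (simp add: numeral_2_eq_2)

lemma sumset_power_mono:
  assumes "0 \<in> V" "m \<le> n"
  shows "sumset_power V m \<subseteq> sumset_power V n"
  using assms(2)
proof (induction rule: dec_induct)
  case (step k)
  have "sumset_power V k + {0} \<subseteq> sumset_power V k + V"
    using assms(1) by (intro set_plus_mono2) auto
  with step.IH show ?case
    by simp
qed simp

lemma sumset_power_uminus:
  fixes V :: "'a::group_add set"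
  assumes "\<forall>x\<in>V. -x \<in> V" "x \<in> sumset_power V n"
  shows "-x \<in> sumset_power V n"
  using assms(2)
proof (induction n arbitrary: x)
  case (Suc n)
  then obtain a b where ab: "x = a + b" "a \<in> sumset_power V n" "b \<in> V"
    by (auto elim: set_plus_elim)
  have "-b + -a \<in> sumset_power V 1 + sumset_power V n"
    using ab Suc.IH assms(1) by (intro set_plus_intro) auto
  then have "-b + -a \<in> sumset_power V (1 + n)"
    by (simp only: sumset_power_add)
  then show ?case
    using ab by (simp add: minus_add)
qed simp

lemma sumset_power_double:
  assumes "V + V \<subseteq> W"
  shows "sumset_power V (2 * n) \<subseteq> sumset_power W n"
proof (induction n)
  case (Suc n)
  have "sumset_power V (2 * Suc n) = sumset_power V (2 * n) + (V + V)"
    by (simp add: add.assoc)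
  also have "\<dots> \<subseteq> sumset_power W n + W"
    using Suc.IH assms by (rule set_plus_mono2)
  finally show ?case by simp
qed simp

lemma open_sumset_power:
  fixes V :: "'a::topological_group_add set"
  assumes "open V"
  shows "open (sumset_power V (Suc n))"
  using open_set_plus[OF assms] by simp

lemma symmetric_nbhd_sumset_power_subset:
  fixes W :: "'a::topological_group_add set"
  assumes "open W" "0 \<in> W"
  shows "\<exists>V. open V \<and> 0 \<in> V \<and> (\<forall>x\<in>V. -x \<in> V) \<and> sumset_power V (2 ^ k) \<subseteq> W"
proof (induction k)
  case 0
  obtain V where V: "open V" "0 \<in> V" "\<forall>x\<in>V. -x \<in> V" "V + V \<subseteq> W"
    using symmetric_nbhd_sum_subset[OF assms] by blast
  have "V \<subseteq> V + V"
    using V(2) set_plus_intro[of _ V 0 V] by force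
  with V show ?case
    by auto
next
  case (Suc k)
  then obtain V where V: "open V" "0 \<in> V" "sumset_power V (2 ^ k) \<subseteq> W"
    by blast
  obtain V' where V': "open V'" "0 \<in> V'" "\<forall>x\<in>V'. -x \<in> V'" "V' + V' \<subseteq> V"
    using symmetric_nbhd_sum_subset[OF V(1,2)] by blast
  have "sumset_power V' (2 ^ Suc k) \<subseteq> sumset_power V (2 ^ k)"
    using sumset_power_double[OF V'(4)] by simp
  with V(3) V' show ?case by blast
qed

lemma translation_sumset_power_subset:
  fixes V :: "'a::group_add set"
  assumes "-a + b \<in> sumset_power V m"
  shows "(+) b ` sumset_power V n \<subseteq> (+) a ` sumset_power V (m + n)"
proof
  fix x assume "x \<in> (+) b ` sumset_power V n"
  then have "(-a + b) + (-b + x) \<in> sumset_power V (m + n)"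
    using assms by (auto simp: sumset_power_add mem_translation_iff)
  then show "x \<in> (+) a ` sumset_power V (m + n)"
    by (simp add: mem_translation_iff add.assoc)
qed

lemma translates_disjoint_if_not_in_sumset:
  fixes V :: "'a::group_add set"
  assumes "\<forall>x\<in>V. -x \<in> V" "-f + h \<notin> V + V"
  shows "(+) h ` V \<inter> (+) f ` V = {}"
proof (rule ccontr)
  assume "(+) h ` V \<inter> (+) f ` V \<noteq> {}"
  then obtain z where "z \<in> (+) h ` V" "z \<in> (+) f ` V"
    by blast
  then have "-h + z \<in> V" "-f + z \<in> V"
    by (simp_all only: mem_translation_iff)
  then have "(-f + z) + -(-h + z) \<in> V + V"
    using assms(1) by (intro set_plus_intro) auto
  moreover have "(-f + z) + -(-h + z) = -f + h"
    by (simp only: minus_add minus_minus add.assoc add_minus_cancel)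
  ultimately show False
    using assms(2) by simp
qed

definition generated_monoid :: "'a::monoid_add set \<Rightarrow> 'a set" where
  "generated_monoid V = (\<Union>n. sumset_power V n)"

lemma sumset_power_subset_generated_monoid: "sumset_power V n \<subseteq> generated_monoid V"
  by (auto simp: generated_monoid_def)

lemma zero_in_generated_monoid: "0 \<in> generated_monoid V"
  using sumset_power_subset_generated_monoid[of V 0] by simp

lemma generated_monoid_add:
  assumes "x \<in> generated_monoid V" "y \<in> generated_monoid V"
  shows "x + y \<in> generated_monoid V"
proof -
  obtain m n where "x \<in> sumset_power V m" "y \<in> sumset_power V n"
    using assms by (auto simp: generated_monoid_def)
  then have "x + y \<in> sumset_power V (m + n)"
    by (rule sumset_power_add_mem)
  then show ?thesis
    using sumset_power_subset_generated_monoid by blast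
qed

lemma generated_monoid_uminus:
  fixes V :: "'a::group_add set"
  assumes "\<forall>x\<in>V. -x \<in> V" "x \<in> generated_monoid V"
  shows "-x \<in> generated_monoid V"
  using assms sumset_power_uminus[OF assms(1)] by (auto simp: generated_monoid_def)

lemma open_generated_monoid:
  fixes V :: "'a::topological_group_add set"
  assumes "open V" "0 \<in> V"
  shows "open (generated_monoid V)"
proof -
  have "sumset_power V n \<subseteq> sumset_power V (Suc n)" for n
    by (rule sumset_power_mono[OF assms(2)]) simp
  then have "generated_monoid V = (\<Union>n. sumset_power V (Suc n))"
    unfolding generated_monoid_def by blast
  then show ?thesis
    using open_sumset_power[OF assms(1)] by auto
qed

lemma generated_monoid_translation_closed:
  assumes step: "\<And>y v. y \<in> Y \<Longrightarrow> v \<in> V \<Longrightarrow> y + v \<in> Y" and "y \<in> Y" "h \<in> generated_monoid V"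
  shows "y + h \<in> Y"
proof -
  obtain n where "h \<in> sumset_power V n"
    using assms(3) by (auto simp: generated_monoid_def)
  then show ?thesis
  proof (induction n arbitrary: h)
    case (Suc n)
    then obtain a v where "h = a + v" "a \<in> sumset_power V n" "v \<in> V"
      by (auto elim: set_plus_elim)
    then show ?case
      using Suc.IH step by (simp add: add.assoc[symmetric])
  qed (use assms(2) in simp)
qed

lemma left_cosets_eq_if_meet:
  fixes H :: "'a::group_add set"
  assumes add: "\<And>x y. x \<in> H \<Longrightarrow> y \<in> H \<Longrightarrow> x + y \<in> H" and uminus: "\<And>x. x \<in> H \<Longrightarrow> -x \<in> H"
    and z: "z \<in> (+) a ` H" "z \<in> (+) b ` H"
  shows "(+) a ` H = (+) b ` H"
proof -
  have sub: "(+) p ` H \<subseteq> (+) q ` H" if "-q + p \<in> H" for p q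
  proof
    fix y assume "y \<in> (+) p ` H"
    then have "(-q + p) + (-p + y) \<in> H"
      using add that by (simp add: mem_translation_iff)
    then show "y \<in> (+) q ` H"
      by (simp add: mem_translation_iff add.assoc)
  qed
  have "-a + z \<in> H" "-(-b + z) \<in> H"
    using z uminus by (auto simp: mem_translation_iff)
  then have "(-a + z) + -(-b + z) \<in> H"
    by (rule add)
  moreover have "(-a + z) + -(-b + z) = -a + b"
    by (simp only: minus_add minus_minus add.assoc add_minus_cancel)
  ultimately have "-a + b \<in> H"
    by simp
  moreover have "-b + a = -(-a + b)"
    by (simp add: minus_add)
  ultimately show ?thesis
    using sub[of b a] sub[of a b] uminus by auto
qed

lemma finite_translates_cover:
  fixes W :: "'a::topological_group_add set"
  assumes "compact (UNIV :: 'a set)" "open W" "x \<in> W"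
  shows "\<exists>C. finite C \<and> (\<Union>g\<in>C. (+) g ` W) = UNIV"
proof -
  have "z \<in> (+) (z + -x) ` W" for z
    using assms(3) by (simp add: mem_translation_iff minus_add add.assoc)
  then have "UNIV \<subseteq> (\<Union>g. (+) g ` W)"
    by blast
  then obtain C where "finite C" "UNIV \<subseteq> (\<Union>g\<in>C. (+) g ` W)"
    using compactE_image[OF assms(1), of UNIV "\<lambda>g. (+) g ` W"] open_left_translation[OF assms(2)]
    by metis
  then show ?thesis
    by blast
qed

lemma finite_left_coset_transversal:
  fixes H :: "'a::topological_group_add set"
  assumes "compact (UNIV :: 'a set)" "open H" "0 \<in> H"
    and add: "\<And>x y. x \<in> H \<Longrightarrow> y \<in> H \<Longrightarrow> x + y \<in> H" and uminus: "\<And>x. x \<in> H \<Longrightarrow> -x \<in> H"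
  shows "\<exists>A. finite A \<and> (\<Union>a\<in>A. (+) a ` H) = UNIV
    \<and> (\<forall>a\<in>A. \<forall>b\<in>A. a \<noteq> b \<longrightarrow> (+) a ` H \<inter> (+) b ` H = {})"
proof -
  define coset where "coset g = (+) g ` H" for g
  obtain C where C: "finite C" "\<Union>(coset ` C) = UNIV"
    using finite_translates_cover[OF assms(1-3)] by (auto simp: coset_def)
  from subset_image_inj[of "coset ` C" coset C, THEN iffD1, OF subset_refl]
  obtain A where A: "A \<subseteq> C" "inj_on coset A" "coset ` C = coset ` A"
    by blast
  have "coset a \<inter> coset b = {}" if "a \<in> A" "b \<in> A" "a \<noteq> b" for a b
  proof (rule ccontr)
    assume "coset a \<inter> coset b \<noteq> {}"
    then obtain z where "z \<in> (+) a ` H" "z \<in> (+) b ` H"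
      by (auto simp: coset_def)
    then have "coset a = coset b"
      unfolding coset_def using left_cosets_eq_if_meet[of H z a b] add uminus by blast
    with A(2) that show False
      by (auto dest: inj_onD)
  qed
  moreover have "finite A"
    using A(1) C(1) by (rule finite_subset)
  moreover have "\<Union>(coset ` A) = UNIV"
    using C(2) A(3) by simp
  ultimately show ?thesis
    unfolding coset_def by blast
qed

lemma partition_on_translates:
  fixes H :: "'a::group_add set"
  assumes cover: "(\<Union>a\<in>A. (+) a ` H) = UNIV"
    and disj: "\<forall>a\<in>A. \<forall>b\<in>A. a \<noteq> b \<longrightarrow> (+) a ` H \<inter> (+) b ` H = {}"
    and \<P>: "partition_on H \<P>"
  shows "partition_on UNIV ((\<lambda>(a, P). (+) a ` P) ` (A \<times> \<P>))"
proof (rule partition_onI)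
  have "x \<in> (\<Union>(a, P)\<in>A \<times> \<P>. (+) a ` P)" for x
  proof -
    obtain a where "a \<in> A" "x \<in> (+) a ` H"
      using cover by blast
    moreover obtain P where "P \<in> \<P>" "-a + x \<in> P"
      using \<P> calculation(2) by (auto simp: partition_on_def mem_translation_iff)
    ultimately show ?thesis
      by (auto simp: mem_translation_iff)
  qed
  then show "\<Union>((\<lambda>(a, P). (+) a ` P) ` (A \<times> \<P>)) = UNIV"
    by blast
  show "disjnt X Y"
    if X: "X \<in> (\<lambda>(a, P). (+) a ` P) ` (A \<times> \<P>)" and Y: "Y \<in> (\<lambda>(a, P). (+) a ` P) ` (A \<times> \<P>)"
      and "X \<noteq> Y" for X Y
  proof -
    obtain a b P Q where ab: "a \<in> A" "b \<in> A" "P \<in> \<P>" "Q \<in> \<P>" "X = (+) a ` P" "Y = (+) b ` Q"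
      using X Y by auto
    then have "P \<subseteq> H" "Q \<subseteq> H"
      using \<P> by (auto simp: partition_on_def)
    show ?thesis
    proof (cases "a = b")
      case True
      then have "P \<inter> Q = {}"
        using ab \<open>X \<noteq> Y\<close> \<P> by (auto simp: partition_on_def dest: disjointD)
      then show ?thesis
        using ab True by (auto simp: disjnt_def mem_translation_iff)
    next
      case False
      then show ?thesis
        using disj ab \<open>P \<subseteq> H\<close> \<open>Q \<subseteq> H\<close> unfolding disjnt_def by blast
    qed
  qed
  show "{} \<notin> (\<lambda>(a, P). (+) a ` P) ` (A \<times> \<P>)"
    using \<P> by (auto simp: partition_on_def)
qed

section \<open>Walks through connected graphs\<close>

lemma rtranclp_imp_successively_path:
  assumes "(\<lambda>a b. a \<in> X \<and> b \<in> X \<and> R a b)\<^sup>*\<^sup>* x y"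
  shows "\<exists>q. successively R (x # q) \<and> last (x # q) = y \<and> set q \<subseteq> X"
  using assms
proof (induction rule: rtranclp_induct)
  case (step y z)
  then obtain q where q: "successively R (x # q)" "last (x # q) = y" "set q \<subseteq> X"
    by blast
  then have "successively R ((x # q) @ [z])"
    unfolding successively_append_iff using step(2) by auto
  then show ?case
    using q step(2) by (intro exI[of _ "q @ [z]"]) auto
qed (auto intro: exI[of _ "[]"])

lemma covering_walk_exists:
  fixes R :: "'v \<Rightarrow> 'v \<Rightarrow> bool"
  assumes "finite X" "x \<in> X" and sym: "\<And>a b. R a b \<Longrightarrow> R b a"
    and conn: "\<And>y. y \<in> X \<Longrightarrow> (\<lambda>a b. a \<in> X \<and> b \<in> X \<and> R a b)\<^sup>*\<^sup>* x y"
  shows "\<exists>w. set w = X \<and> successively R w"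
proof -
  let ?R = "\<lambda>a b. a \<in> X \<and> b \<in> X \<and> R a b"
  have "symp ?R"
    using sym by (auto intro: sympI)
  then have reach: "?R\<^sup>*\<^sup>* a b" if "a \<in> X" "b \<in> X" for a b
    using conn[OF that(1)] conn[OF that(2)] by (meson rtranclp_trans sympD symp_rtranclp)
  have "\<exists>w. w \<noteq> [] \<and> set w \<subseteq> X \<and> T \<subseteq> set w \<and> successively R w" if "finite T" "T \<subseteq> X" for T
    using that
  proof (induction T rule: finite_induct)
    case empty
    then show ?case
      using assms(2) by (intro exI[of _ "[x]"]) auto
  next
    case (insert t T)
    then obtain w where w: "w \<noteq> []" "set w \<subseteq> X" "T \<subseteq> set w" "successively R w"
      by auto
    have "last w \<in> X"
      using w(1,2) by auto
    then obtain q where q: "successively R (last w # q)" "last (last w # q) = t" "set q \<subseteq> X"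
      using rtranclp_imp_successively_path[OF reach] insert.prems by blast
    have "successively R (w @ q)"
      unfolding successively_append_iff using w(1,4) q(1) by (auto simp: successively_Cons)
    moreover have "t \<in> set (w @ q)"
      using q(2) w(1) by (cases q) auto
    ultimately show ?case
      using w q(3) by (intro exI[of _ "w @ q"]) auto
  qed
  then obtain w where "set w \<subseteq> X" "X \<subseteq> set w" "successively R w"
    using assms(1) by blast
  then show ?thesis
    by blast
qed

definition visits :: "'v list \<Rightarrow> 'v \<Rightarrow> nat set" where
  "visits w i = {t. t < length w \<and> w ! t = i}"

lemma finite_visits: "finite (visits w i)"
  by (simp add: visits_def)

lemma card_visits_le: "card (visits w i) \<le> length w"
  using card_mono[of "{..<length w}" "visits w i"] by (auto simp: visits_def)

lemma visits_nonempty: "i \<in> set w \<Longrightarrow> visits w i \<noteq> {}"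
  by (auto simp: visits_def in_set_conv_nth)

lemma nth_in_visits: "t < length w \<Longrightarrow> t \<in> visits w (w ! t)"
  by (simp add: visits_def)

lemma UN_visits: "(\<Union>i\<in>set w. \<Union>t\<in>visits w i. f i t) = (\<Union>t<length w. f (w ! t) t)"
  by (auto simp: visits_def) (use nth_mem in blast)

section \<open>Finite measures with the Darboux property\<close>

lemma discrete_intermediate_value:
  fixes f :: "nat \<Rightarrow> real"
  assumes "f 0 \<le> t" "t < f n"
  shows "\<exists>j<n. f j \<le> t \<and> t < f (Suc j)"
  using assms(2)
proof (induction n)
  case (Suc n)
  then show ?case
    by (cases "t < f n") (auto intro: less_SucI)
qed (use assms(1) in simp)

context finite_measure
begin

lemma approx_from_below_by_fine_cover:
  assumes C: "set Cs \<subseteq> sets M" "\<Union>(set Cs) = space M" "\<forall>X\<in>set Cs. measure M X < e"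
    and A: "A \<in> sets M" and B: "B \<in> sets M" "B \<subseteq> A" "measure M B \<le> t"
    and t: "t < measure M A"
  shows "\<exists>B'\<in>sets M. B \<subseteq> B' \<and> B' \<subseteq> A \<and> measure M B' \<le> t \<and> t - measure M B' < e"
proof -
  define D where "D j = B \<union> (A \<inter> \<Union>(set (take j Cs)))" for j
  have D_sets: "D j \<in> sets M" for j
  proof -
    have "\<Union>(set (take j Cs)) \<in> sets M"
      using C(1) by (intro sets.finite_Union) (auto dest: in_set_takeD)
    then show ?thesis
      using A B by (auto simp: D_def)
  qed
  have "D (length Cs) = A"
    using C(2) B(2) sets.sets_into_space[OF A] by (auto simp: D_def)
  then obtain j where j: "j < length Cs" "measure M (D j) \<le> t" "t < measure M (D (Suc j))"
    using discrete_intermediate_value[of "\<lambda>j. measure M (D j)" t "length Cs"] B(3) t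
    by (auto simp: D_def)
  have Cs_j: "Cs ! j \<in> sets M" "measure M (Cs ! j) < e"
    using C j(1) by auto
  have "D (Suc j) = D j \<union> (A \<inter> Cs ! j)"
    using j(1) by (auto simp: D_def take_Suc_conv_app_nth)
  then have "measure M (D (Suc j)) \<le> measure M (D j) + measure M (A \<inter> Cs ! j)"
    using D_sets A Cs_j by (simp add: measure_Un_le)
  also have "\<dots> \<le> measure M (D j) + measure M (Cs ! j)"
    using Cs_j by (simp add: finite_measure_mono)
  finally show ?thesis
    using j Cs_j(2) D_sets B(2) by (intro bexI[of _ "D j"]) (auto simp: D_def)
qed

lemma measure_Darboux_if_fine_covers:
  assumes fine: "\<And>e. 0 < e \<Longrightarrow> \<exists>Cs. set Cs \<subseteq> sets M \<and> \<Union>(set Cs) = space M \<and> (\<forall>X\<in>set Cs. measure M X < e)"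
    and A: "A \<in> sets M" and t: "0 \<le> t" "t \<le> measure M A"
  shows "\<exists>B\<in>sets M. B \<subseteq> A \<and> measure M B = t"
proof (cases "t = measure M A")
  case False
  then have t_less: "t < measure M A"
    using t by simp
  define P where "P n B \<longleftrightarrow> B \<in> sets M \<and> B \<subseteq> A \<and> measure M B \<le> t
    \<and> t - measure M B < inverse (real (Suc n))" for n B
  have step: "\<exists>B'. P n B' \<and> B \<subseteq> B'" if "B \<in> sets M" "B \<subseteq> A" "measure M B \<le> t" for n B
  proof -
    obtain Cs where "set Cs \<subseteq> sets M" "\<Union>(set Cs) = space M"
      "\<forall>X\<in>set Cs. measure M X < inverse (real (Suc n))"
      using fine[of "inverse (real (Suc n))"] by auto
    from approx_from_below_by_fine_cover[OF this A that t_less] show ?thesis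
      by (auto simp: P_def)
  qed
  have "\<exists>B. P 0 B"
    using step[of "{}" 0] t(1) by auto
  moreover have "\<exists>B'. P (Suc n) B' \<and> B \<subseteq> B'" if "P n B" for n B
    using step[of B "Suc n"] that by (auto simp: P_def)
  ultimately obtain F where "\<forall>n. P n (F n) \<and> F n \<subseteq> F (Suc n)"
    using dependent_nat_choice[of P "\<lambda>n B B'. B \<subseteq> B'"] by metis
  then have F: "\<And>n. P n (F n)" "\<And>n. F n \<subseteq> F (Suc n)"
    by auto
  have F_sets: "range F \<subseteq> sets M"
    using F(1) by (auto simp: P_def)
  have "(\<lambda>n. measure M (F n)) \<longlonglongrightarrow> measure M (\<Union>n. F n)"
    using F_sets F(2) by (intro finite_Lim_measure_incseq incseq_SucI) auto
  moreover have "(\<lambda>n. measure M (F n)) \<longlonglongrightarrow> t"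
  proof (rule tendsto_sandwich)
    have "t - inverse (real (Suc n)) \<le> measure M (F n) \<and> measure M (F n) \<le> t" for n
      using F(1)[of n] unfolding P_def by linarith
    then show "\<forall>\<^sub>F n in sequentially. t - inverse (real (Suc n)) \<le> measure M (F n)"
      and "\<forall>\<^sub>F n in sequentially. measure M (F n) \<le> t"
      by (simp_all add: always_eventually)
    show "(\<lambda>n. t - inverse (real (Suc n))) \<longlonglongrightarrow> t"
      using tendsto_diff[OF tendsto_const LIMSEQ_inverse_real_of_nat, of t] by simp
  qed simp
  ultimately have "measure M (\<Union>n. F n) = t"
    by (rule LIMSEQ_unique)
  moreover have "(\<Union>n. F n) \<subseteq> A"
    using F(1) by (auto simp: P_def)
  ultimately show ?thesis
    using F_sets by blast
qed (use A in blast)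

end

lemma disjoint_cells_between:
  fixes C D :: "nat \<Rightarrow> 'a set"
  assumes "disjoint_family_on C {..<n}" "\<And>i. i < n \<Longrightarrow> C i \<subseteq> D i"
    and "\<And>i. C i \<in> sets M" "\<And>i. D i \<in> sets M"
  shows "\<exists>Q. disjoint_family_on Q {..<n} \<and> (\<forall>i<n. Q i \<in> sets M \<and> C i \<subseteq> Q i \<and> Q i \<subseteq> D i)
    \<and> (\<Union>i<n. Q i) = (\<Union>i<n. D i)"
proof -
  define Q where "Q i = C i \<union> (disjointed D i - (\<Union>j<n. C j))" for i
  have "disjointed D i \<in> sets M" for i
    using sets.range_disjointed_sets[of D M] assms(4) by auto
  then have "Q i \<in> sets M" for i
    using assms(3) by (auto simp: Q_def)
  moreover have "disjoint_family_on Q {..<n}"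
    unfolding disjoint_family_on_def
  proof (intro ballI impI)
    fix i j assume "i \<in> {..<n}" "j \<in> {..<n}" "i \<noteq> j"
    moreover have "C i \<inter> C j = {}"
      using assms(1) calculation by (auto dest: disjoint_family_onD)
    moreover have "disjointed D i \<inter> disjointed D j = {}"
      using disjoint_family_disjointed[of D] calculation(3) by (auto dest: disjoint_family_onD)
    ultimately show "Q i \<inter> Q j = {}"
      by (auto simp: Q_def)
  qed
  moreover have "C i \<subseteq> Q i" "Q i \<subseteq> D i" if "i < n" for i
    using assms(2)[OF that] disjointed_subset[of D i] by (auto simp: Q_def)
  moreover have "(\<Union>i<n. D i) \<subseteq> (\<Union>i<n. Q i)"
  proof
    fix x assume "x \<in> (\<Union>i<n. D i)"
    then have "x \<in> (\<Union>i<n. disjointed D i)"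
      using finite_UN_disjointed_eq[of D n] by (simp add: atLeast0LessThan)
    then show "x \<in> (\<Union>i<n. Q i)"
      by (auto simp: Q_def)
  qed
  ultimately show ?thesis
    by (intro exI[of _ Q]) blast
qed

definition equi_partition :: "'a measure \<Rightarrow> 'a set \<Rightarrow> real \<Rightarrow> 'a set set \<Rightarrow> bool" where
  "equi_partition M X c \<P> \<longleftrightarrow>
     finite \<P> \<and> partition_on X \<P> \<and> (\<forall>P\<in>\<P>. P \<in> sets M \<and> measure M P = c)"

lemma equi_partition_Un:
  assumes "equi_partition M X c \<P>" "equi_partition M Y c \<Q>" "X \<inter> Y = {}"
  shows "equi_partition M (X \<union> Y) c (\<P> \<union> \<Q>)"
  using assms by (auto simp: equi_partition_def partition_on_def intro: disjoint_union)

lemma ex_nat_mult_le_less: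
  fixes x c :: real
  assumes "0 < c" "0 \<le> x"
  shows "\<exists>j::nat. real j * c \<le> x \<and> x < real (Suc j) * c"
proof -
  define j where "j = nat \<lfloor>x / c\<rfloor>"
  have "real j \<le> x / c"
    using assms by (simp add: j_def)
  moreover have "x / c < real j + 1"
    using assms by (simp add: j_def)
  ultimately show ?thesis
    using assms by (intro exI[of _ j]) (auto simp: field_simps)
qed

locale darboux_measure = finite_measure +
  assumes measure_Darboux:
    "A \<in> sets M \<Longrightarrow> 0 \<le> t \<Longrightarrow> t \<le> measure M A \<Longrightarrow> \<exists>B\<in>sets M. B \<subseteq> A \<and> measure M B = t"
begin

lemma split_equal_measure:
  assumes "finite I" "I \<noteq> {}" "A \<in> sets M"
  shows "\<exists>P. (\<forall>i\<in>I. P i \<in> sets M \<and> measure M (P i) = measure M A / card I)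
    \<and> disjoint_family_on P I \<and> (\<Union>i\<in>I. P i) = A"
  using assms
proof (induction I arbitrary: A rule: finite_ne_induct)
  case (singleton i)
  then show ?case
    by (intro exI[of _ "\<lambda>_. A"]) (auto simp: disjoint_family_on_def)
next
  case (insert i I)
  define m where "m = card I"
  have m: "0 < m" "card (insert i I) = Suc m"
    using insert.hyps by (auto simp: m_def)
  obtain B where B: "B \<in> sets M" "B \<subseteq> A" "measure M B = measure M A / Suc m"
    using measure_Darboux[OF insert.prems, of "measure M A / Suc m"]
    by (auto simp: field_simps)
  obtain P where P: "\<forall>j\<in>I. P j \<in> sets M \<and> measure M (P j) = measure M (A - B) / m"
    "disjoint_family_on P I" "(\<Union>j\<in>I. P j) = A - B"
    using insert.IH[of "A - B"] insert.prems B(1) by (auto simp: m_def)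
  have "measure M (A - B) = measure M A - measure M A / Suc m"
    using finite_measure_Diff[OF insert.prems B(1,2)] B(3) by simp
  then have "measure M (A - B) / m = measure M A / Suc m"
    using m(1) by (simp add: field_simps)
  moreover have "(P(i := B)) ` I = P ` I"
    using insert.hyps(3) by (intro image_cong) auto
  ultimately show ?case
    using P B m(2) insert.hyps(3)
    by (intro exI[of _ "P(i := B)"]) (auto simp: disjoint_family_on_def)
qed

lemma equi_partition_of_multiple:
  assumes "A \<in> sets M" "0 < c" "0 < k" "measure M A = real k * c"
  shows "\<exists>\<P>. equi_partition M A c \<P>"
proof -
  obtain P where P: "\<forall>i<k. P i \<in> sets M \<and> measure M (P i) = c"
    "disjoint_family_on P {..<k}" "(\<Union>i<k. P i) = A"
    using split_equal_measure[of "{..<k}" A] assms by auto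
  have "{} \<notin> P ` {..<k}"
    using P(1) assms(2) by fastforce
  then have "equi_partition M A c (P ` {..<k})"
    using P by (auto simp: equi_partition_def partition_on_def disjoint_family_on_disjoint_image)
  then show ?thesis ..
qed

lemma equi_partition_with_remainder:
  assumes c: "0 < c" and A: "A \<in> sets M" and S: "S \<in> sets M" "S \<subseteq> A" "c \<le> measure M S"
  obtains R \<P> j where "R \<in> sets M" "R \<subseteq> S" "equi_partition M (A - R) c \<P>"
    "measure M (A - R) = real j * c"
proof -
  obtain j where j: "real j * c \<le> measure M A" "measure M A < real (Suc j) * c"
    using ex_nat_mult_le_less[OF c, of "measure M A"] by auto
  have "c \<le> measure M A"
    using S finite_measure_mono[OF S(2) A] by linarith
  then have "0 < j"
    using j(2) by (cases j) auto
  obtain R where R: "R \<in> sets M" "R \<subseteq> S" "measure M R = measure M A - real j * c"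
    using measure_Darboux[OF S(1), of "measure M A - real j * c"] j S(3) by (auto simp: field_simps)
  have mR: "measure M (A - R) = real j * c"
    using finite_measure_Diff[OF A R(1)] R S(2) by auto
  obtain \<P> where "equi_partition M (A - R) c \<P>"
    using equi_partition_of_multiple[OF _ c \<open>0 < j\<close> mR] A R(1) by blast
  with R mR show ?thesis
    using that by blast
qed

lemma chain_equi_partition:
  fixes ok :: "'a set \<Rightarrow> bool"
  assumes c: "0 < c" and ok_mono: "\<And>P Q. ok P \<Longrightarrow> Q \<subseteq> P \<Longrightarrow> ok Q"
    and "Ss \<noteq> []" "R \<in> sets M" "\<forall>S\<in>set Ss. S \<in> sets M \<and> c \<le> measure M S"
    and "sorted_wrt disjnt (R # Ss)" "ok (R \<union> hd Ss)" "successively (\<lambda>X Y. ok (X \<union> Y)) Ss"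
    and "measure M (R \<union> \<Union>(set Ss)) = real k * c"
  shows "\<exists>\<P>. equi_partition M (R \<union> \<Union>(set Ss)) c \<P> \<and> (\<forall>P\<in>\<P>. ok P)"
  using assms(3-)
proof (induction Ss arbitrary: R k)
  case (Cons S Ss)
  define A where "A = R \<union> S"
  have A: "A \<in> sets M" "ok A" "c \<le> measure M A"
    using Cons.prems finite_measure_mono[of S A] by (auto simp: A_def)
  have ok_parts: "\<forall>P\<in>\<P>. ok P" if "equi_partition M X c \<P>" "X \<subseteq> A" for X \<P>
  proof
    fix P assume "P \<in> \<P>"
    with that have "P \<subseteq> A"
      by (auto simp: equi_partition_def partition_on_def)
    with A(2) show "ok P"
      by (rule ok_mono)
  qed
  show ?case
  proof (cases Ss)
    case Nil
    have "0 < real k * c"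
      using A(3) c Cons.prems(7) Nil by (simp add: A_def)
    then obtain \<P> where "equi_partition M A c \<P>"
      using equi_partition_of_multiple[OF A(1) c, of k] Cons.prems(7) Nil c
      by (auto simp: A_def zero_less_mult_iff)
    then show ?thesis
      using ok_parts Nil by (auto simp: A_def)
  next
    case (Cons T Ss')
    \<comment> \<open>The remainder is cut out of S, so that it still fits together with the next piece.\<close>
    have "S \<in> sets M" "S \<subseteq> A" "c \<le> measure M S"
      using Cons.prems(3) by (auto simp: A_def)
    then obtain R' \<P> j where R': "R' \<in> sets M" "R' \<subseteq> S" and \<P>: "equi_partition M (A - R') c \<P>"
      and "measure M (A - R') = real j * c"
      by (rule equi_partition_with_remainder[OF c A(1)])
    define X where "X = R' \<union> \<Union>(set Ss)"
    have X_sets: "X \<in> sets M"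
      using R'(1) Cons.prems(3) by (auto simp: X_def)
    have disj: "(A - R') \<inter> X = {}"
      using Cons.prems(4) R'(2) by (auto simp: A_def X_def disjnt_def)
    have split: "R \<union> \<Union>(set (S # Ss)) = (A - R') \<union> X"
      using R'(2) by (auto simp: A_def X_def)
    have "measure M X = real k * c - real j * c"
      using Cons.prems(7) finite_measure_Union[OF _ X_sets disj] A(1) R'(1) \<open>measure M (A - R') = _\<close>
      unfolding split by simp
    then have "measure M X = real (k - j) * c"
      using c measure_nonneg[of M X] by (auto simp: left_diff_distrib)
    moreover have "sorted_wrt disjnt (R' # Ss)"
      using Cons.prems(4) R'(2) by (auto intro: disjnt_subset1)
    moreover have "ok (R' \<union> hd Ss)"
      using Cons.prems(6) R'(2) \<open>Ss = T # Ss'\<close> by (auto intro: ok_mono[of "S \<union> T"])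
    ultimately obtain \<Q> where \<Q>: "equi_partition M X c \<Q>" "\<forall>P\<in>\<Q>. ok P"
      using Cons.IH[of R' "k - j"] R'(1) Cons.prems(3,6) \<open>Ss = T # Ss'\<close> unfolding X_def by auto
    show ?thesis
      using equi_partition_Un[OF \<P> \<Q>(1) disj] ok_parts[OF \<P>] \<Q>(2) unfolding split by blast
  qed
qed simp

lemma split_by_visits:
  assumes "\<forall>i\<in>set w. Q i \<in> sets M"
  obtains P where
    "\<And>i t. i \<in> set w \<Longrightarrow> t \<in> visits w i \<Longrightarrow>
      P i t \<in> sets M \<and> measure M (P i t) = measure M (Q i) / card (visits w i)"
    "\<And>i. i \<in> set w \<Longrightarrow> disjoint_family_on (P i) (visits w i)"
    "\<And>i. i \<in> set w \<Longrightarrow> (\<Union>t\<in>visits w i. P i t) = Q i"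
proof -
  have "\<forall>i\<in>set w. \<exists>P. (\<forall>t\<in>visits w i. P t \<in> sets M \<and> measure M (P t) = measure M (Q i) / card (visits w i))
      \<and> disjoint_family_on P (visits w i) \<and> (\<Union>t\<in>visits w i. P t) = Q i"
  proof
    fix i assume "i \<in> set w"
    with assms show "\<exists>P. (\<forall>t\<in>visits w i. P t \<in> sets M \<and> measure M (P t) = measure M (Q i) / card (visits w i))
      \<and> disjoint_family_on P (visits w i) \<and> (\<Union>t\<in>visits w i. P t) = Q i"
      by (intro split_equal_measure finite_visits visits_nonempty) auto
  qed
  from bchoice[OF this] obtain P where "\<forall>i\<in>set w.
      (\<forall>t\<in>visits w i. P i t \<in> sets M \<and> measure M (P i t) = measure M (Q i) / card (visits w i))
      \<and> disjoint_family_on (P i) (visits w i) \<and> (\<Union>t\<in>visits w i. P i t) = Q i" ..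
  then show ?thesis
    by (intro that[of P]) auto
qed

lemma split_along_list:
  assumes Q: "\<forall>i\<in>set w. Q i \<in> sets M" "disjoint_family_on Q (set w)"
  shows "\<exists>Ss. length Ss = length w
    \<and> (\<forall>t<length w. Ss ! t \<in> sets M \<and> Ss ! t \<subseteq> Q (w ! t)
          \<and> measure M (Q (w ! t)) / length w \<le> measure M (Ss ! t))
    \<and> sorted_wrt disjnt Ss \<and> \<Union>(set Ss) = (\<Union>i\<in>set w. Q i)"
proof -
  obtain P where P: "\<And>i t. i \<in> set w \<Longrightarrow> t \<in> visits w i \<Longrightarrow>
        P i t \<in> sets M \<and> measure M (P i t) = measure M (Q i) / card (visits w i)"
      "\<And>i. i \<in> set w \<Longrightarrow> disjoint_family_on (P i) (visits w i)"
      "\<And>i. i \<in> set w \<Longrightarrow> (\<Union>t\<in>visits w i. P i t) = Q i"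
    using split_by_visits[OF Q(1)] by blast
  define Ss where "Ss = map (\<lambda>t. P (w ! t) t) [0..<length w]"
  have Ss_nth: "Ss ! t = P (w ! t) t" and w_t: "w ! t \<in> set w" if "t < length w" for t
    using that by (simp_all add: Ss_def)
  have "measure M (Q (w ! t)) / length w \<le> measure M (Q (w ! t)) / card (visits w (w ! t))"
    if "t < length w" for t
  proof -
    have "0 < card (visits w (w ! t))"
      using finite_visits nth_in_visits[OF that] by (auto simp: card_gt_0_iff)
    then show ?thesis
      using card_visits_le that by (intro divide_left_mono) (auto simp: zero_less_mult_iff)
  qed
  moreover have "Ss ! t \<in> sets M \<and> Ss ! t \<subseteq> Q (w ! t)
      \<and> measure M (Ss ! t) = measure M (Q (w ! t)) / card (visits w (w ! t))" if "t < length w" for t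
    using P(1)[OF w_t[OF that] nth_in_visits[OF that]] P(3)[OF w_t[OF that]] nth_in_visits[OF that]
      Ss_nth[OF that] by auto
  ultimately have parts: "\<forall>t<length w. Ss ! t \<in> sets M \<and> Ss ! t \<subseteq> Q (w ! t)
      \<and> measure M (Q (w ! t)) / length w \<le> measure M (Ss ! t)"
    by simp
  have "disjnt (Ss ! t) (Ss ! t')" if "t < t'" "t' < length w" for t t'
  proof (cases "w ! t = w ! t'")
    case True
    have "disjoint_family_on (P (w ! t)) (visits w (w ! t))"
      using P(2)[OF w_t] that by simp
    moreover have "t \<in> visits w (w ! t)" "t' \<in> visits w (w ! t)"
      using nth_in_visits[of t w] nth_in_visits[of t' w] True that by simp_all
    ultimately show ?thesis
      using Ss_nth[of t] Ss_nth[of t'] True that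
      by (simp add: disjoint_family_on_def disjnt_def)
  next
    case False
    then have "Q (w ! t) \<inter> Q (w ! t') = {}"
      using Q(2) w_t that by (auto simp: disjoint_family_on_def)
    moreover have "Ss ! t \<subseteq> Q (w ! t)" "Ss ! t' \<subseteq> Q (w ! t')"
      using parts that by simp_all
    ultimately show ?thesis
      by (auto simp: disjnt_def)
  qed
  then have "sorted_wrt disjnt Ss"
    by (simp add: sorted_wrt_iff_nth_less Ss_def)
  moreover have "\<Union>(set Ss) = (\<Union>i\<in>set w. Q i)"
  proof -
    have "\<Union>(set Ss) = (\<Union>t<length w. P (w ! t) t)"
      by (auto simp: Ss_def)
    also have "\<dots> = (\<Union>i\<in>set w. \<Union>t\<in>visits w i. P i t)"
      by (rule UN_visits[symmetric])
    also have "\<dots> = (\<Union>i\<in>set w. Q i)"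
      using P(3) by (intro SUP_cong) auto
    finally show ?thesis .
  qed
  ultimately show ?thesis
    using parts by (intro exI[of _ Ss]) (auto simp: Ss_def)
qed

end

section \<open>Haar measure on a non-discrete compact group\<close>

locale nondiscrete_compact_haar = finite_measure M
  for M :: "'a::{topological_group_add,t2_space} measure" +
  assumes sets_eq_borel: "sets M = sets borel"
    and emeasure_UNIV: "emeasure M UNIV = 1"
    and emeasure_translation: "A \<in> sets borel \<Longrightarrow> emeasure M ((+) g ` A) = emeasure M A"
    and outer_regular: "A \<in> sets borel \<Longrightarrow> emeasure M A = (INF W\<in>{W. open W \<and> A \<subseteq> W}. emeasure M W)"
    and compact_UNIV: "compact (UNIV :: 'a set)"
    and not_discrete: "\<not> (\<forall>S :: 'a set. open S)"
begin

lemma space_eq_UNIV [simp]: "space M = UNIV"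
  using sets_eq_imp_space_eq[OF sets_eq_borel] by simp

lemma measure_UNIV [simp]: "measure M UNIV = 1"
  using emeasure_UNIV by (simp add: measure_def)

lemma open_in_sets [intro]: "open S \<Longrightarrow> S \<in> sets M"
  by (simp add: sets_eq_borel)

lemma translation_in_sets: "A \<in> sets M \<Longrightarrow> (+) g ` A \<in> sets M"
  using borel_left_translation[of A g] by (simp add: sets_eq_borel)

lemma measure_translation: "A \<in> sets M \<Longrightarrow> measure M ((+) g ` A) = measure M A"
  using emeasure_translation[of A g] by (simp add: sets_eq_borel measure_def)

lemma measure_open_pos:
  assumes "open W" "x \<in> W"
  shows "0 < measure M W"
proof -
  obtain C where C: "finite C" "(\<Union>g\<in>C. (+) g ` W) = UNIV"
    using finite_translates_cover[OF compact_UNIV assms] by blast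
  have "1 = measure M (\<Union>g\<in>C. (+) g ` W)"
    by (simp add: C(2))
  also have "\<dots> \<le> (\<Sum>g\<in>C. measure M ((+) g ` W))"
    using C(1) assms(1) by (intro finite_measure_subadditive_finite) (auto intro: open_left_translation)
  also have "\<dots> = real (card C) * measure M W"
    using assms(1) by (simp add: measure_translation open_in_sets)
  finally have "1 \<le> real (card C) * measure M W" .
  then show ?thesis
    by (metis measure_nonneg mult_zero_right not_one_le_zero order_less_le)
qed

lemma card_disjoint_translates_le:
  assumes "open V" "finite F" "disjoint_family_on (\<lambda>f. (+) f ` V) F"
  shows "real (card F) * measure M V \<le> 1"
proof -
  have "measure M (\<Union>f\<in>F. (+) f ` V) = (\<Sum>f\<in>F. measure M ((+) f ` V))"
    using assms by (intro finite_measure_finite_Union) (auto intro: open_left_translation)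
  also have "\<dots> = real (card F) * measure M V"
    using assms(1) by (simp add: measure_translation open_in_sets)
  finally show ?thesis
    using bounded_measure[of "\<Union>f\<in>F. (+) f ` V"] by simp
qed

lemma measure_singleton: "measure M {x} = 0"
proof (rule ccontr)
  define d where "d = measure M {x}"
  assume "measure M {x} \<noteq> 0"
  then have d_pos: "0 < d"
    using measure_nonneg[of M "{x}"] unfolding d_def by linarith
  have singletons: "measure M {y} = d" for y
    using measure_translation[of "{x}" "y + -x"] by (simp add: d_def sets_eq_borel add.assoc)
  have "finite (UNIV :: 'a set)"
  proof (rule ccontr)
    assume "infinite (UNIV :: 'a set)"
    then obtain B :: "'a set" where B: "finite B" "card B = nat \<lceil>2 / d\<rceil>"
      using infinite_arbitrarily_large by blast
    have "measure M B = (\<Sum>y\<in>B. measure M {y})"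
      using B(1) by (rule finite_measure_eq_sum_singleton) (simp add: sets_eq_borel)
    then have "measure M B = real (card B) * d"
      by (simp add: singletons)
    moreover have "2 / d \<le> real (card B)"
      using B(2) by linarith
    then have "2 \<le> real (card B) * d"
      using d_pos by (simp add: divide_le_eq)
    ultimately show False
      using bounded_measure[of B] by simp
  qed
  then have "closed (- S)" for S :: "'a set"
    using finite_subset[of "- S" UNIV] by (simp add: finite_imp_closed)
  then have "open S" for S :: "'a set"
    by (simp add: closed_def)
  with not_discrete show False
    by blast
qed

lemma small_open_nbhd:
  assumes "0 < e"
  shows "\<exists>W. open W \<and> 0 \<in> W \<and> measure M W < e"
proof -
  have "(INF W\<in>{W. open W \<and> {0} \<subseteq> W}. emeasure M W) < ennreal e"
    using outer_regular[of "{0}"] measure_singleton[of 0] assms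
    by (simp add: emeasure_eq_measure)
  then obtain W where "open W" "0 \<in> W" "emeasure M W < ennreal e"
    by (auto simp: INF_less_iff)
  then show ?thesis
    using assms by (intro exI[of _ W]) (auto simp: emeasure_eq_measure ennreal_less_iff)
qed

lemma fine_translate_covers:
  assumes "0 < e"
  shows "\<exists>Cs. set Cs \<subseteq> sets M \<and> \<Union>(set Cs) = space M \<and> (\<forall>X\<in>set Cs. measure M X < e)"
proof -
  obtain W where W: "open W" "0 \<in> W" "measure M W < e"
    using small_open_nbhd[OF assms] by blast
  obtain C where C: "finite C" "(\<Union>g\<in>C. (+) g ` W) = UNIV"
    using finite_translates_cover[OF compact_UNIV W(1,2)] by blast
  obtain gs where "set gs = C"
    using finite_list[OF C(1)] by blast
  then show ?thesis
    using C(2) W by (intro exI[of _ "map (\<lambda>g. (+) g ` W) gs"])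
      (auto simp: measure_translation open_in_sets open_left_translation)
qed

sublocale darboux_measure
  by unfold_locales (rule measure_Darboux_if_fine_covers[OF fine_translate_covers])

lemma equi_partition_from_open_subgroup:
  assumes H: "open H" "0 \<in> H" "\<And>x y. x \<in> H \<Longrightarrow> y \<in> H \<Longrightarrow> x + y \<in> H" "\<And>x. x \<in> H \<Longrightarrow> -x \<in> H"
    and \<P>: "equi_partition M H c \<P>" "\<forall>P\<in>\<P>. \<exists>g. P \<subseteq> (+) g ` W"
  shows "\<exists>\<Q>. equi_partition M UNIV c \<Q> \<and> (\<forall>Q\<in>\<Q>. \<exists>g. Q \<subseteq> (+) g ` W)"
proof -
  obtain A where A: "finite A" "(\<Union>a\<in>A. (+) a ` H) = UNIV"
      "\<forall>a\<in>A. \<forall>b\<in>A. a \<noteq> b \<longrightarrow> (+) a ` H \<inter> (+) b ` H = {}"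
    using finite_left_coset_transversal[OF compact_UNIV H] by blast
  define \<Q> where "\<Q> = (\<lambda>(a, P). (+) a ` P) ` (A \<times> \<P>)"
  have "finite \<Q>" "partition_on UNIV \<Q>"
    using A(1) \<P>(1) partition_on_translates[OF A(2,3)] by (auto simp: \<Q>_def equi_partition_def)
  moreover have "Q \<in> sets M \<and> measure M Q = c \<and> (\<exists>g. Q \<subseteq> (+) g ` W)" if "Q \<in> \<Q>" for Q
  proof -
    obtain a P where aP: "Q = (+) a ` P" "P \<in> \<P>"
      using \<open>Q \<in> \<Q>\<close> unfolding \<Q>_def by auto
    moreover obtain g where "P \<subseteq> (+) g ` W"
      using \<P>(2) aP(2) by blast
    ultimately have "Q \<subseteq> (+) (a + g) ` W"
      by (auto simp: add.assoc)
    then show ?thesis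
      using aP \<P>(1) by (auto simp: equi_partition_def translation_in_sets measure_translation)
  qed
  ultimately show ?thesis
    unfolding equi_partition_def by blast
qed

end

section \<open>The subgroup generated by a symmetric neighbourhood\<close>

locale haar_symmetric_nbhd = nondiscrete_compact_haar M
  for M :: "'a::{topological_group_add,t2_space} measure" +
  fixes V :: "'a set"
  assumes open_V: "open V" and zero_in_V: "0 \<in> V" and symmetric_V: "\<forall>x\<in>V. -x \<in> V"
begin

abbreviation H :: "'a set" where "H \<equiv> generated_monoid V"

lemma open_H: "open H"
  using open_generated_monoid[OF open_V zero_in_V] .

lemma V_subset_H: "V \<subseteq> H"
  using sumset_power_subset_generated_monoid[of V 1] by simp

lemma measure_V_pos: "0 < measure M V"
  using measure_open_pos[OF open_V zero_in_V] .

lemma maximal_packing: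
  "\<exists>F. F \<subseteq> H \<and> finite F \<and> F \<noteq> {} \<and> disjoint_family_on (\<lambda>f. (+) f ` V) F
     \<and> (\<forall>h\<in>H. \<exists>f\<in>F. -f + h \<in> V + V)"
proof -
  define packing where "packing F \<longleftrightarrow> F \<subseteq> H \<and> finite F \<and> disjoint_family_on (\<lambda>f. (+) f ` V) F" for F
  have "card F < nat \<lceil>1 / measure M V\<rceil> + 1" if "packing F" for F
  proof -
    have "real (card F) \<le> 1 / measure M V"
      using card_disjoint_translates_le[OF open_V] that measure_V_pos
      by (simp add: packing_def field_simps)
    also have "\<dots> \<le> real (nat \<lceil>1 / measure M V\<rceil>)"
      by (rule real_nat_ceiling_ge)
    finally show ?thesis
      by simp
  qed
  moreover have "packing {0}"
    by (simp add: packing_def zero_in_generated_monoid disjoint_family_on_def)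
  ultimately obtain F where F: "packing F" "\<And>F'. packing F' \<Longrightarrow> card F' \<le> card F"
    using ex_has_greatest_nat[of packing "{0}" card] by metis
  have cover: "\<exists>f\<in>F. -f + h \<in> V + V" if "h \<in> H" for h
  proof (rule ccontr)
    assume far: "\<not> (\<exists>f\<in>F. -f + h \<in> V + V)"
    then have "(+) h ` V \<inter> (+) f ` V = {}" if "f \<in> F" for f
      using translates_disjoint_if_not_in_sumset[OF symmetric_V] that by blast
    moreover have "h \<notin> F"
      using far zero_in_V by (metis add.left_inverse add_0 set_plus_intro)
    ultimately have "packing (insert h F)" "card (insert h F) = Suc (card F)"
      using F(1) that by (auto simp: packing_def disjoint_family_on_def Int_commute)
    then show False
      using F(2) by fastforce
  qed
  then have "F \<noteq> {}"
    using zero_in_generated_monoid by blast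
  then show ?thesis
    using F(1) cover by (auto simp: packing_def)
qed

end

locale haar_packing = haar_symmetric_nbhd M V
  for M :: "'a::{topological_group_add,t2_space} measure" and V +
  fixes fs :: "'a list"
  assumes fs_nonempty: "fs \<noteq> []" and fs_in_H: "set fs \<subseteq> H"
    and fs_disjoint: "disjoint_family_on (\<lambda>i. (+) (fs ! i) ` V) {..<length fs}"
    and fs_cover: "\<forall>h\<in>H. \<exists>i<length fs. -(fs ! i) + h \<in> V + V"
begin

(* 5 = 2 + 1 + 2: a single step in V leads from the cell f_i + V^2 into the cell f_j + V^2. *)
definition adjacent :: "nat \<Rightarrow> nat \<Rightarrow> bool" where
  "adjacent i j \<longleftrightarrow> -(fs ! i) + fs ! j \<in> sumset_power V 5"

lemma adjacent_sym: "adjacent i j \<Longrightarrow> adjacent j i"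
  using sumset_power_uminus[OF symmetric_V, of "-(fs ! i) + fs ! j" 5]
  by (simp add: adjacent_def minus_add)

lemma adjacent_translations_subset:
  assumes "adjacent i j"
  shows "(+) (fs ! i) ` (V + V) \<union> (+) (fs ! j) ` (V + V) \<subseteq> (+) (fs ! i) ` sumset_power V 7"
proof -
  have "(+) (fs ! i) ` sumset_power V 2 \<subseteq> (+) (fs ! i) ` sumset_power V 7"
    using sumset_power_mono[OF zero_in_V, of 2 7] by auto
  moreover have "(+) (fs ! j) ` sumset_power V 2 \<subseteq> (+) (fs ! i) ` sumset_power V (5 + 2)"
    using assms unfolding adjacent_def by (rule translation_sumset_power_subset)
  ultimately show ?thesis
    by simp
qed

lemma adjacent_connected:
  assumes "j < length fs"
  shows "(\<lambda>i j. i < length fs \<and> j < length fs \<and> adjacent i j)\<^sup>*\<^sup>* 0 j"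
proof -
  let ?R = "\<lambda>i j. i < length fs \<and> j < length fs \<and> adjacent i j"
  define Y where "Y = {h \<in> H. \<exists>i<length fs. ?R\<^sup>*\<^sup>* 0 i \<and> -(fs ! i) + h \<in> V + V}"
  have V_V_subset: "V + V \<subseteq> sumset_power V 5"
    using sumset_power_mono[OF zero_in_V, of 2 5] by simp
  have step: "h + v \<in> Y" if "h \<in> Y" "v \<in> V" for h v
  proof -
    from that(1) have "h \<in> H" "\<exists>i<length fs. ?R\<^sup>*\<^sup>* 0 i \<and> -(fs ! i) + h \<in> sumset_power V 2"
      by (simp_all add: Y_def)
    then obtain i where i: "i < length fs" "?R\<^sup>*\<^sup>* 0 i" "-(fs ! i) + h \<in> sumset_power V 2" "h \<in> H"
      by blast
    have hv: "h + v \<in> H"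
      using i(4) that(2) V_subset_H by (auto intro: generated_monoid_add)
    then obtain j where j: "j < length fs" "-(fs ! j) + (h + v) \<in> sumset_power V 2"
      using fs_cover by auto
    have "((-(fs ! i) + h) + v) + -(-(fs ! j) + (h + v)) \<in> sumset_power V (2 + 1 + 2)"
      using i(3) that(2) sumset_power_uminus[OF symmetric_V j(2)]
      by (intro sumset_power_add_mem) simp_all
    moreover have "((-(fs ! i) + h) + v) + -(-(fs ! j) + (h + v)) = -(fs ! i) + fs ! j"
      by (simp only: minus_add minus_minus add.assoc add_minus_cancel)
    ultimately have "?R i j"
      using i(1) j(1) by (simp add: adjacent_def)
    then show ?thesis
      using i(2) j hv by (auto simp: Y_def intro: rtranclp.rtrancl_into_rtrancl)
  qed
  have "fs ! 0 \<in> Y"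
    using fs_nonempty fs_in_H zero_in_V by (auto simp: Y_def intro!: exI[of _ 0] set_plus_intro[of 0 V 0 V, simplified])
  moreover have "-(fs ! 0) + fs ! j \<in> H"
    using fs_nonempty fs_in_H assms
    by (intro generated_monoid_add generated_monoid_uminus[OF symmetric_V]) auto
  ultimately have "fs ! 0 + (-(fs ! 0) + fs ! j) \<in> Y"
    using generated_monoid_translation_closed[of Y V] step by blast
  then obtain i where i: "i < length fs" "?R\<^sup>*\<^sup>* 0 i" "-(fs ! i) + fs ! j \<in> V + V"
    by (auto simp: Y_def add.assoc[symmetric])
  then have "?R i j"
    using V_V_subset assms by (auto simp: adjacent_def)
  with i(2) show ?thesis
    by (rule rtranclp.rtrancl_into_rtrancl)
qed

lemma covering_walk: "\<exists>w. set w = {..<length fs} \<and> successively adjacent w"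
  using covering_walk_exists[of "{..<length fs}" 0 adjacent] fs_nonempty adjacent_sym adjacent_connected
  by auto

lemma packing_cells:
  "\<exists>Q. disjoint_family_on Q {..<length fs}
     \<and> (\<forall>i<length fs. Q i \<in> sets M \<and> (+) (fs ! i) ` V \<subseteq> Q i \<and> Q i \<subseteq> (+) (fs ! i) ` (V + V))
     \<and> (\<Union>i<length fs. Q i) = H"
proof -
  have "V \<subseteq> V + V"
    using zero_in_V set_plus_intro[of _ V 0 V] by force
  then have C_D: "(+) (fs ! i) ` V \<subseteq> (+) (fs ! i) ` (V + V)" for i
    by (rule image_mono)
  have C_sets: "(+) g ` V \<in> sets M" and D_sets: "(+) g ` (V + V) \<in> sets M" for g
    by (intro open_in_sets open_left_translation open_V open_set_plus)+
  have "(\<Union>i<length fs. (+) (fs ! i) ` (V + V)) = H"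
  proof
    have "V + V \<subseteq> H"
      using sumset_power_subset_generated_monoid[of V 2] by simp
    then show "(\<Union>i<length fs. (+) (fs ! i) ` (V + V)) \<subseteq> H"
      using fs_in_H by (auto intro!: generated_monoid_add)
    show "H \<subseteq> (\<Union>i<length fs. (+) (fs ! i) ` (V + V))"
      using fs_cover unfolding UN_iff lessThan_iff mem_translation_iff subset_iff by blast
  qed
  with disjoint_cells_between[OF fs_disjoint C_D C_sets D_sets] show ?thesis
    by simp
qed

lemma chain_of_pieces:
  obtains Ss where "Ss \<noteq> []" "sorted_wrt disjnt Ss" "\<Union>(set Ss) = H"
    "\<forall>S\<in>set Ss. S \<in> sets M \<and> measure M V / length Ss \<le> measure M S"
    "\<exists>g. hd Ss \<subseteq> (+) g ` sumset_power V 7"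
    "successively (\<lambda>X Y. \<exists>g. X \<union> Y \<subseteq> (+) g ` sumset_power V 7) Ss"
proof -
  obtain Q where Q: "disjoint_family_on Q {..<length fs}"
      "\<And>i. i < length fs \<Longrightarrow> Q i \<in> sets M \<and> (+) (fs ! i) ` V \<subseteq> Q i \<and> Q i \<subseteq> (+) (fs ! i) ` (V + V)"
      "(\<Union>i<length fs. Q i) = H"
    using packing_cells by blast
  obtain w where w: "set w = {..<length fs}" "successively adjacent w"
    using covering_walk by blast
  have w_nth: "w ! t < length fs" if "t < length w" for t
    using w(1) that nth_mem by blast
  obtain Ss where Ss: "length Ss = length w"
      "\<And>t. t < length w \<Longrightarrow> Ss ! t \<in> sets M \<and> Ss ! t \<subseteq> Q (w ! t)
        \<and> measure M (Q (w ! t)) / length w \<le> measure M (Ss ! t)"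
      "sorted_wrt disjnt Ss" "\<Union>(set Ss) = (\<Union>i\<in>set w. Q i)"
    using split_along_list[of w Q] Q(1,2) w(1) by auto
  have "0 \<in> set w"
    using w(1) fs_nonempty by simp
  then have "w \<noteq> []"
    by auto
  have V_le_Q: "measure M V \<le> measure M (Q i)" if "i < length fs" for i
    using Q(2)[OF that] finite_measure_mono[of "(+) (fs ! i) ` V" "Q i"] open_V
    by (simp add: measure_translation open_in_sets)
  have big: "measure M V / length Ss \<le> measure M (Ss ! t)" if "t < length Ss" for t
  proof -
    have "measure M V / length Ss \<le> measure M (Q (w ! t)) / length w"
      using Ss(1) w_nth[of t] that V_le_Q by (simp add: divide_right_mono)
    also have "\<dots> \<le> measure M (Ss ! t)"
      using Ss(1,2) that by simp
    finally show ?thesis .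
  qed
  have near: "Ss ! t \<subseteq> (+) (fs ! (w ! t)) ` (V + V)" if "t < length Ss" for t
    using Ss(1) Ss(2)[of t] Q(2)[OF w_nth[of t]] that by auto
  have "\<exists>g. Ss ! t \<union> Ss ! Suc t \<subseteq> (+) g ` sumset_power V 7" if "Suc t < length Ss" for t
  proof -
    have "adjacent (w ! t) (w ! Suc t)"
      using successively_nth[OF w(2), of t] Ss(1) that by simp
    moreover have "t < length Ss"
      using that by simp
    ultimately have "Ss ! t \<union> Ss ! Suc t \<subseteq> (+) (fs ! (w ! t)) ` sumset_power V 7"
      using Un_mono[OF near[of t] near[OF that]] adjacent_translations_subset[of "w ! t" "w ! Suc t"]
      by blast
    then show ?thesis ..
  qed
  then have chain: "successively (\<lambda>X Y. \<exists>g. X \<union> Y \<subseteq> (+) g ` sumset_power V 7) Ss"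
    by (simp add: successively_conv_nth)
  have "Ss \<noteq> []"
    using \<open>w \<noteq> []\<close> Ss(1) by auto
  moreover have "V + V \<subseteq> sumset_power V 7"
    using sumset_power_mono[OF zero_in_V, of 2 7] by simp
  then have "hd Ss \<subseteq> (+) (fs ! (w ! 0)) ` sumset_power V 7"
    using near[of 0] \<open>Ss \<noteq> []\<close> by (metis hd_conv_nth length_greater_0_conv image_mono subset_trans)
  moreover have "\<forall>S\<in>set Ss. S \<in> sets M \<and> measure M V / length Ss \<le> measure M S"
    using big Ss(1,2) by (auto simp: in_set_conv_nth)
  moreover have "\<Union>(set Ss) = H"
    using Ss(4) w(1) Q(3) by simp
  ultimately show ?thesis
    using that[OF \<open>Ss \<noteq> []\<close> Ss(3)] chain by blast
qed

lemma equi_partition_H_from_packing: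
  "\<exists>c \<P>. equi_partition M H c \<P> \<and> (\<forall>P\<in>\<P>. \<exists>g. P \<subseteq> (+) g ` sumset_power V 7)"
proof -
  obtain Ss where Ss: "Ss \<noteq> []" "sorted_wrt disjnt Ss" "\<Union>(set Ss) = H"
      "\<forall>S\<in>set Ss. S \<in> sets M \<and> measure M V / length Ss \<le> measure M S"
      "\<exists>g. hd Ss \<subseteq> (+) g ` sumset_power V 7"
      "successively (\<lambda>X Y. \<exists>g. X \<union> Y \<subseteq> (+) g ` sumset_power V 7) Ss"
    by (rule chain_of_pieces)
  define k where "k = nat \<lceil>length Ss * measure M H / measure M V\<rceil> + 1"
  define c where "c = measure M H / k"
  have "0 < k"
    by (simp add: k_def)
  moreover have "0 < measure M H"
    using measure_open_pos[OF open_H zero_in_generated_monoid] .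
  ultimately have "0 < c" and kc: "measure M H = real k * c"
    by (simp_all add: c_def)
  have "length Ss * measure M H / measure M V \<le> k"
    unfolding k_def by linarith
  then have "length Ss * measure M H \<le> k * measure M V"
    using measure_V_pos by (simp add: divide_le_eq)
  then have "c \<le> measure M V / length Ss"
    using \<open>0 < k\<close> Ss(1) by (simp add: c_def field_simps)
  then have "\<forall>S\<in>set Ss. S \<in> sets M \<and> c \<le> measure M S"
    using Ss(4) by force
  moreover have "\<exists>g. Q \<subseteq> (+) g ` sumset_power V 7" if "\<exists>g. P \<subseteq> (+) g ` sumset_power V 7" "Q \<subseteq> P" for P Q
    using that by blast
  ultimately have "\<exists>\<P>. equi_partition M ({} \<union> \<Union>(set Ss)) c \<P> \<and> (\<forall>P\<in>\<P>. \<exists>g. P \<subseteq> (+) g ` sumset_power V 7)"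
    using Ss(1,2,5,6) kc
    by (intro chain_equi_partition[where k=k, OF \<open>0 < c\<close>]) (auto simp: Ss(3))
  then show ?thesis
    using Ss(3) by auto
qed

end

context haar_symmetric_nbhd
begin

lemma equi_partition_H:
  "\<exists>c \<P>. equi_partition M H c \<P> \<and> (\<forall>P\<in>\<P>. \<exists>g. P \<subseteq> (+) g ` sumset_power V 7)"
proof -
  obtain F where F: "F \<subseteq> H" "finite F" "F \<noteq> {}" "disjoint_family_on (\<lambda>f. (+) f ` V) F"
      "\<forall>h\<in>H. \<exists>f\<in>F. -f + h \<in> V + V"
    using maximal_packing by blast
  obtain fs where fs: "set fs = F" "distinct fs"
    using finite_distinct_list[OF F(2)] by blast
  have "disjoint_family_on (\<lambda>i. (+) (fs ! i) ` V) {..<length fs}"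
    unfolding disjoint_family_on_def
  proof (intro ballI impI)
    fix i j assume "i \<in> {..<length fs}" "j \<in> {..<length fs}" "i \<noteq> j"
    then have "fs ! i \<in> F" "fs ! j \<in> F" "fs ! i \<noteq> fs ! j"
      using fs by (auto simp: nth_eq_iff_index_eq)
    then show "(+) (fs ! i) ` V \<inter> (+) (fs ! j) ` V = {}"
      using F(4) by (auto dest: disjoint_family_onD)
  qed
  moreover have "\<forall>h\<in>H. \<exists>i<length fs. -(fs ! i) + h \<in> V + V"
    using F(5) fs(1) by (metis in_set_conv_nth)
  ultimately interpret haar_packing M V fs
    using F(1,3) fs(1) by unfold_locales auto
  show ?thesis
    by (rule equi_partition_H_from_packing)
qed

lemma equi_partition_UNIV:
  "\<exists>c \<Q>. equi_partition M UNIV c \<Q> \<and> (\<forall>Q\<in>\<Q>. \<exists>g. Q \<subseteq> (+) g ` sumset_power V 7)"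
proof -
  obtain c \<P> where \<P>: "equi_partition M H c \<P>" "\<forall>P\<in>\<P>. \<exists>g. P \<subseteq> (+) g ` sumset_power V 7"
    using equi_partition_H by blast
  show ?thesis
    using equi_partition_from_open_subgroup[OF open_H zero_in_generated_monoid generated_monoid_add
      generated_monoid_uminus[OF symmetric_V] \<P>] by blast
qed

end

lemma haar_symmetric_nbhdI:
  fixes \<nu> :: "'a::{topological_group_add,t2_space} measure"
  assumes "compact (UNIV :: 'a set)" "\<not> (\<forall>S :: 'a set. open S)" "haar_measure \<nu>" "emeasure \<nu> UNIV = 1"
    and "open V" "0 \<in> V" "\<forall>x\<in>V. -x \<in> V"
  shows "haar_symmetric_nbhd \<nu> V"
proof -
  have haar: "sets \<nu> = sets borel"
      "\<And>g A. A \<in> sets borel \<Longrightarrow> emeasure \<nu> ((+) g ` A) = emeasure \<nu> A"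
      "\<And>A. A \<in> sets borel \<Longrightarrow> emeasure \<nu> A = (INF W\<in>{W. open W \<and> A \<subseteq> W}. emeasure \<nu> W)"
    using assms(3) unfolding haar_measure_def by auto
  have "finite_measure \<nu>"
    using sets_eq_imp_space_eq[OF haar(1)] assms(4) by (intro finite_measureI) simp
  then show ?thesis
    by (intro haar_symmetric_nbhd.intro nondiscrete_compact_haar.intro nondiscrete_compact_haar_axioms.intro
        haar_symmetric_nbhd_axioms.intro haar assms(1,2,4-7))
qed

theorem theorem2:
  fixes \<nu> :: "'a::{topological_group_add,t2_space} measure"
    and U :: "'a set"
  assumes compact_G: "compact (UNIV :: 'a set)"
    and non_discrete: "\<not> (\<forall>S :: 'a set. open S)"
    and haar: "haar_measure \<nu>"
    and normalized: "emeasure \<nu> UNIV = 1"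
    and nbhd: "0 \<in> interior U"
  shows "\<exists>\<P>. finite \<P> \<and> partition_on UNIV \<P> \<and> (\<forall>P\<in>\<P>. haar_measurable \<nu> P)
             \<and> U_fine U \<P> \<and> equisize \<nu> \<P>"
proof -
  obtain V where V: "open V" "0 \<in> V" "\<forall>x\<in>V. -x \<in> V" "sumset_power V (2 ^ 3) \<subseteq> interior U"
    using symmetric_nbhd_sumset_power_subset[OF open_interior nbhd] by blast
  interpret haar_symmetric_nbhd \<nu> V
    using haar_symmetric_nbhdI[OF compact_G non_discrete haar normalized V(1-3)] .
  obtain c \<Q> where \<Q>: "equi_partition \<nu> UNIV c \<Q>" "\<forall>Q\<in>\<Q>. \<exists>g. Q \<subseteq> (+) g ` sumset_power V 7"
    using equi_partition_UNIV by blast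
  have "sumset_power V 7 \<subseteq> U"
    using sumset_power_mono[OF V(2), of 7 8] V(4) interior_subset by fastforce
  then have "U_fine U \<Q>"
    using \<Q>(2) unfolding U_fine_def by (meson image_mono subset_trans)
  moreover have "equisize \<nu> \<Q>"
    using \<Q>(1) by (simp add: equisize_def equi_partition_def emeasure_eq_measure)
  moreover have "\<forall>Q\<in>\<Q>. haar_measurable \<nu> Q"
    using \<Q>(1) by (simp add: equi_partition_def haar_measurable_def)
  moreover have "finite \<Q>" "partition_on UNIV \<Q>"
    using \<Q>(1) by (simp_all add: equi_partition_def)
  ultimately show ?thesis
    by (intro exI[of _ \<Q>] conjI)
qed

end
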